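(* Let $M,N\ge 0$. For every two elements $u<w$ of the poset of shuffles $W_{MN}$ and every $i\ge 0$, there is a bijection between the set of elements of $[u,w]$ of rank $\rho(u)+i$ and the set of elements of $[u,w]$ of rank $\rho(w)-i$.
   Context: Let $\mathcal{A}=\{a_1,\dots,a_M\}$, $\mathcal{X}=\{x_1,\dots,x_N\}$ be disjoint sets. A shuffle word is a word (possibly empty) with distinct letters from $\mathcal{A}\cup\mathcal{X}$ in which the letters of each alphabet appear in increasing order of subscripts. $W_{MN}$ is the set of shuffle words ordered by the reflexive-transitive closure of: $w$ is covered by $w'$ iff $w'$ is obtained from $w$ by deleting a letter of $\mathcal{A}$ or inserting a letter of $\mathcal{X}$. Its rank function is $\rho(w)=(M-\#(\{w\}\cap\mathcal{A}))+\#(\{w\}\cap\mathcal{X})$, where $\{w\}$ is the set of letters of $w$. *)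

theory Defs
  imports Main
begin

(* Letters: Inl i stands for a_i (alphabet A), Inr j stands for x_j (alphabet X). *)
type_synonym letter = "nat + nat"

definition alphA :: "nat \<Rightarrow> letter set" where
  "alphA M = Inl ` {1..M}"

definition alphX :: "nat \<Rightarrow> letter set" where
  "alphX N = Inr ` {1..N}"

definition A_subscripts :: "letter list \<Rightarrow> nat list" where
  "A_subscripts w = map projl (filter isl w)"

definition X_subscripts :: "letter list \<Rightarrow> nat list" where
  "X_subscripts w = map projr (filter (\<lambda>c. \<not> isl c) w)"

definition shuffle_word :: "nat \<Rightarrow> nat \<Rightarrow> letter list \<Rightarrow> bool" where
  "shuffle_word M N w \<longleftrightarrow>
     distinct w \<and> set w \<subseteq> alphA M \<union> alphX N \<and>
     sorted_wrt (<) (A_subscripts w) \<and> sorted_wrt (<) (X_subscripts w)"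

definition W :: "nat \<Rightarrow> nat \<Rightarrow> letter list set" where
  "W M N = {w. shuffle_word M N w}"

definition covered_by :: "nat \<Rightarrow> nat \<Rightarrow> letter list \<Rightarrow> letter list \<Rightarrow> bool" where
  "covered_by M N w w' \<longleftrightarrow> w \<in> W M N \<and> w' \<in> W M N \<and>
     ((\<exists>xs ys c. c \<in> alphA M \<and> w = xs @ [c] @ ys \<and> w' = xs @ ys) \<or>
      (\<exists>xs ys c. c \<in> alphX N \<and> w = xs @ ys \<and> w' = xs @ [c] @ ys))"

definition shuffle_le :: "nat \<Rightarrow> nat \<Rightarrow> letter list \<Rightarrow> letter list \<Rightarrow> bool" where
  "shuffle_le M N u w \<longleftrightarrow> u \<in> W M N \<and> w \<in> W M N \<and> (covered_by M N)\<^sup>*\<^sup>* u w"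

definition shuffle_less :: "nat \<Rightarrow> nat \<Rightarrow> letter list \<Rightarrow> letter list \<Rightarrow> bool" where
  "shuffle_less M N u w \<longleftrightarrow> shuffle_le M N u w \<and> u \<noteq> w"

definition shuffle_interval :: "nat \<Rightarrow> nat \<Rightarrow> letter list \<Rightarrow> letter list \<Rightarrow> letter list set" where
  "shuffle_interval M N u w = {v. shuffle_le M N u v \<and> shuffle_le M N v w}"

definition rho :: "nat \<Rightarrow> nat \<Rightarrow> letter list \<Rightarrow> nat" where
  "rho M N w = (M - card (set w \<inter> alphA M)) + card (set w \<inter> alphX N)"

end

theory Submission
  imports Defs
begin

(*
  For u \<le> w in W_MN the interval [u,w] consists of the distinct words v built from letters
  of u and w, containing all their common letters, and listing the letters shared with u
  (resp. w) in the same order as u (resp. w); moreover \<rho>(v) - \<rho>(u) is the number of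
  letters in which u and v differ.  These conditions make sense for arbitrary words.

  Split u and w at their first common letter c, u = \<alpha> c u', w = \<xi> c w'.  Every v in [u,w]
  splits as \<beta> c v' with \<beta> in [\<alpha>,\<xi>] and v' in [u',w'], so the sequence counting [u,w]
  by rank is the convolution of the corresponding sequences for the two smaller intervals.
  As \<alpha> and \<xi> share no letter, [\<alpha>,\<xi>] is a copy of W_mn with m = |\<alpha>|, n = |\<xi>|, whose
  rank generating function is \<Sum>_j C(m,j) C(n,j) t^j (1 + t)^(m+n-2j), a sum of palindromic
  polynomials of degree m + n.  Convolution preserves palindromicity, so by induction the
  rank levels \<rho>(u) + i and \<rho>(w) - i of [u,w] have the same size.
*)


section \<open>Words compatible with two words\<close>

definition same_order :: "'a list \<Rightarrow> 'a list \<Rightarrow> bool" where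
  "same_order u v \<longleftrightarrow> filter (\<lambda>c. c \<in> set v) u = filter (\<lambda>c. c \<in> set u) v"

lemma same_order_refl: "same_order u u"
  by (simp add: same_order_def)

lemma same_order_sym: "same_order u v \<Longrightarrow> same_order v u"
  by (simp add: same_order_def)

lemma same_order_set_eq:
  assumes "same_order u w" and "set u = set w"
  shows "u = w"
proof -
  have "u = filter (\<lambda>c. c \<in> set w) u" using assms(2) by (simp add: filter_True)
  also have "\<dots> = filter (\<lambda>c. c \<in> set u) w" using assms(1) by (simp add: same_order_def)
  also have "\<dots> = w" using assms(2) by (simp add: filter_True)
  finally show ?thesis .
qed

lemma same_order_append_Cons_filter_iff:
  assumes "distinct (al @ c # u2)"
  shows "same_order (al @ c # u2) (b @ c # v2) \<longleftrightarrow>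
    filter (\<lambda>y. y \<in> set (b @ c # v2)) al = filter (\<lambda>y. y \<in> set (al @ c # u2)) b \<and>
    filter (\<lambda>y. y \<in> set (b @ c # v2)) u2 = filter (\<lambda>y. y \<in> set (al @ c # u2)) v2"
proof -
  let ?U = "set (al @ c # u2)" and ?V = "set (b @ c # v2)"
  have "filter (\<lambda>y. y \<in> ?V) (al @ c # u2) = filter (\<lambda>y. y \<in> ?V) al @ c # filter (\<lambda>y. y \<in> ?V) u2"
    and "filter (\<lambda>y. y \<in> ?U) (b @ c # v2) = filter (\<lambda>y. y \<in> ?U) b @ c # filter (\<lambda>y. y \<in> ?U) v2"
    by simp_all
  moreover have "c \<notin> set (filter (\<lambda>y. y \<in> ?V) al)" and "c \<notin> set (filter (\<lambda>y. y \<in> ?V) u2)"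
    using assms by auto
  ultimately show ?thesis
    unfolding same_order_def by (simp only: append_Cons_eq_iff not_False_eq_True)
qed

lemma same_order_append_Cons_iff:
  assumes du: "distinct (al @ c # u2)" and dv: "distinct (b @ c # v2)"
  shows "same_order (al @ c # u2) (b @ c # v2) \<longleftrightarrow>
    set b \<inter> set u2 = {} \<and> set al \<inter> set v2 = {} \<and> same_order al b \<and> same_order u2 v2"
proof -
  let ?U = "set (al @ c # u2)" and ?V = "set (b @ c # v2)"
  have restrict:
    "filter (\<lambda>y. y \<in> ?V) al = filter (\<lambda>y. y \<in> set b) al"
    "filter (\<lambda>y. y \<in> ?U) b = filter (\<lambda>y. y \<in> set al) b"
    "filter (\<lambda>y. y \<in> ?V) u2 = filter (\<lambda>y. y \<in> set v2) u2"
    "filter (\<lambda>y. y \<in> ?U) v2 = filter (\<lambda>y. y \<in> set u2) v2"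
    if "set b \<inter> set u2 = {}" and "set al \<inter> set v2 = {}"
    using du dv that by (auto intro!: filter_cong)
  show ?thesis
  proof
    assume "same_order (al @ c # u2) (b @ c # v2)"
    then have al_b: "filter (\<lambda>y. y \<in> ?V) al = filter (\<lambda>y. y \<in> ?U) b"
      and u2_v2: "filter (\<lambda>y. y \<in> ?V) u2 = filter (\<lambda>y. y \<in> ?U) v2"
      using same_order_append_Cons_filter_iff[OF du] by blast+
    have "set b \<inter> set u2 \<subseteq> set al" and "set al \<inter> set v2 \<subseteq> set u2"
      using arg_cong[where f = set, OF al_b] arg_cong[where f = set, OF u2_v2] by auto
    then have "set b \<inter> set u2 = {}" and "set al \<inter> set v2 = {}"
      using du by auto
    then show "set b \<inter> set u2 = {} \<and> set al \<inter> set v2 = {} \<and> same_order al b \<and> same_order u2 v2"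
      using al_b u2_v2 restrict unfolding same_order_def by simp
  next
    assume "set b \<inter> set u2 = {} \<and> set al \<inter> set v2 = {} \<and> same_order al b \<and> same_order u2 v2"
    then show "same_order (al @ c # u2) (b @ c # v2)"
      using same_order_append_Cons_filter_iff[OF du] restrict unfolding same_order_def by simp
  qed
qed

definition between :: "'a list \<Rightarrow> 'a list \<Rightarrow> 'a list set" where
  "between u w = {v. distinct v \<and> set u \<inter> set w \<subseteq> set v \<and> set v \<subseteq> set u \<union> set w \<and>
     same_order u v \<and> same_order w v}"

definition letter_dist :: "'a list \<Rightarrow> 'a list \<Rightarrow> nat" where
  "letter_dist u v = card (set u - set v) + card (set v - set u)"

definition rank_count :: "'a list \<Rightarrow> 'a list \<Rightarrow> nat \<Rightarrow> nat" where
  "rank_count u w i = card {v \<in> between u w. letter_dist u v = i}"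

lemma finite_between: "finite (between u w)"
  by (rule finite_subset[OF _ finite_subset_distinct[of "set u \<union> set w"]])
    (auto simp: between_def)

lemma letter_dist_append_Cons:
  assumes "c \<notin> set al \<union> set u2 \<union> set b \<union> set v2"
    and "(set al \<union> set b) \<inter> (set u2 \<union> set v2) = {}"
  shows "letter_dist (al @ c # u2) (b @ c # v2) = letter_dist al b + letter_dist u2 v2"
proof -
  have "set (al @ c # u2) - set (b @ c # v2) = (set al - set b) \<union> (set u2 - set v2)"
    and "set (b @ c # v2) - set (al @ c # u2) = (set b - set al) \<union> (set v2 - set u2)"
    using assms by auto
  moreover have "(set al - set b) \<inter> (set u2 - set v2) = {}"
    and "(set b - set al) \<inter> (set v2 - set u2) = {}"
    using assms by auto
  ultimately show ?thesis
    unfolding letter_dist_def by (simp add: card_Un_disjoint)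
qed

section \<open>Palindromic sequences\<close>

definition convolution :: "(nat \<Rightarrow> nat) \<Rightarrow> (nat \<Rightarrow> nat) \<Rightarrow> nat \<Rightarrow> nat" where
  "convolution f g i = (\<Sum>(j, k) \<in> {(j, k). j + k = i}. f j * g k)"

definition palindromic :: "nat \<Rightarrow> (nat \<Rightarrow> nat) \<Rightarrow> bool" where
  "palindromic D f \<longleftrightarrow> (\<forall>i. f i = (if i \<le> D then f (D - i) else 0))"

lemma finite_antidiagonal: "finite {(j, k). j + k = (i::nat)}"
  by (rule finite_subset[of _ "{..i} \<times> {..i}"]) auto

lemma card_pairs_eq_convolution:
  assumes "finite A" and "finite B"
  shows "card {(a, b) \<in> A \<times> B. f a + g b = i} =
    convolution (\<lambda>j. card {a \<in> A. f a = j}) (\<lambda>k. card {b \<in> B. g b = k}) i"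
proof -
  have "{(a, b) \<in> A \<times> B. f a + g b = i} =
      (\<Union>p \<in> {(j, k). j + k = i}. {a \<in> A. f a = fst p} \<times> {b \<in> B. g b = snd p})"
    by auto
  also have "card \<dots> = (\<Sum>p \<in> {(j, k). j + k = i}. card {a \<in> A. f a = fst p} * card {b \<in> B. g b = snd p})"
    using assms by (subst card_UN_disjoint) (auto simp: finite_antidiagonal card_cartesian_product)
  finally show ?thesis
    unfolding convolution_def by (simp add: case_prod_unfold)
qed

lemma palindromic_beyond: "palindromic D f \<Longrightarrow> D < i \<Longrightarrow> f i = 0"
  unfolding palindromic_def by (metis not_le)

lemma palindromic_reflect: "palindromic D f \<Longrightarrow> i \<le> D \<Longrightarrow> f (D - i) = f i"
  unfolding palindromic_def by metis

lemma convolution_eq_box_sum: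
  assumes "palindromic D1 f" and "palindromic D2 g"
  shows "convolution f g i = (\<Sum>(j, k) \<in> {(j, k). j \<le> D1 \<and> k \<le> D2 \<and> j + k = i}. f j * g k)"
  unfolding convolution_def
proof (rule sum.mono_neutral_right)
  show "\<forall>p \<in> {(j, k). j + k = i} - {(j, k). j \<le> D1 \<and> k \<le> D2 \<and> j + k = i}.
      (case p of (j, k) \<Rightarrow> f j * g k) = 0"
  proof
    fix p assume "p \<in> {(j, k). j + k = i} - {(j, k). j \<le> D1 \<and> k \<le> D2 \<and> j + k = i}"
    then obtain j k where "p = (j, k)" and "\<not> (j \<le> D1 \<and> k \<le> D2)" by auto
    then show "(case p of (j, k) \<Rightarrow> f j * g k) = 0"
      using palindromic_beyond[OF assms(1), of j] palindromic_beyond[OF assms(2), of k] by auto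
  qed
qed (auto simp: finite_antidiagonal)

lemma palindromic_convolution:
  assumes f: "palindromic D1 f" and g: "palindromic D2 g"
  shows "palindromic (D1 + D2) (convolution f g)"
  unfolding palindromic_def
proof
  fix i
  let ?box = "\<lambda>i. {(j, k). j \<le> D1 \<and> k \<le> D2 \<and> j + k = i}"
  show "convolution f g i = (if i \<le> D1 + D2 then convolution f g (D1 + D2 - i) else 0)"
  proof (cases "i \<le> D1 + D2")
    case True
    have "(\<Sum>(j, k) \<in> ?box (D1 + D2 - i). f j * g k) = (\<Sum>(j, k) \<in> ?box i. f j * g k)"
      by (rule sum.reindex_bij_witness[of _ "\<lambda>(j, k). (D1 - j, D2 - k)" "\<lambda>(j, k). (D1 - j, D2 - k)"])
        (use True in \<open>auto simp: palindromic_reflect[OF f] palindromic_reflect[OF g]\<close>)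
    then show ?thesis
      using True by (simp add: convolution_eq_box_sum[OF f g])
  next
    case False
    then have "convolution f g i = 0"
      unfolding convolution_eq_box_sum[OF f g] by (intro sum.neutral) auto
    then show ?thesis
      using False by simp
  qed
qed

lemma palindromic_sum:
  assumes "\<And>j. j \<in> J \<Longrightarrow> palindromic D (f j)"
  shows "palindromic D (\<lambda>i. \<Sum>j\<in>J. c j * f j i)"
  unfolding palindromic_def
proof
  fix i
  have "f j i = (if i \<le> D then f j (D - i) else 0)" if "j \<in> J" for j
    using assms[OF that] unfolding palindromic_def by blast
  then show "(\<Sum>j\<in>J. c j * f j i) = (if i \<le> D then \<Sum>j\<in>J. c j * f j (D - i) else 0)"
    by (cases "i \<le> D") (simp_all cong: sum.cong)
qed

section \<open>Splitting at the first common letter\<close>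

context
  fixes al u2 xi w2 :: "'a list" and c :: 'a
  assumes distinct_u: "distinct (al @ c # u2)" and distinct_w: "distinct (xi @ c # w2)"
    and first_common: "set al \<inter> set (xi @ c # w2) = {}" "set xi \<inter> set (al @ c # u2) = {}"
begin

lemma between_append_Cons_split:
  assumes v: "v \<in> between (al @ c # u2) (xi @ c # w2)"
  obtains b v2 where "v = b @ c # v2" and "b \<in> between al xi" and "v2 \<in> between u2 w2"
proof -
  from v have "c \<in> set v" by (auto simp: between_def)
  then obtain b v2 where v_eq: "v = b @ c # v2" by (meson split_list)
  have dv: "distinct (b @ c # v2)" using v v_eq by (simp add: between_def)
  have "same_order (al @ c # u2) (b @ c # v2)" "same_order (xi @ c # w2) (b @ c # v2)"
    using v v_eq by (simp_all add: between_def)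
  then have u_split: "set b \<inter> set u2 = {}" "set al \<inter> set v2 = {}" "same_order al b" "same_order u2 v2"
    and w_split: "set b \<inter> set w2 = {}" "set xi \<inter> set v2 = {}" "same_order xi b" "same_order w2 v2"
    unfolding same_order_append_Cons_iff[OF distinct_u dv] same_order_append_Cons_iff[OF distinct_w dv]
    by blast+
  have sv: "set v \<subseteq> set (al @ c # u2) \<union> set (xi @ c # w2)"
    and cv: "set (al @ c # u2) \<inter> set (xi @ c # w2) \<subseteq> set v"
    using v by (simp_all add: between_def)
  have "set b \<subseteq> set al \<union> set xi"
    using sv dv u_split(1) w_split(1) unfolding v_eq by auto
  moreover have "set v2 \<subseteq> set u2 \<union> set w2"
    using sv dv u_split(2) w_split(2) unfolding v_eq by auto
  moreover have "set u2 \<inter> set w2 \<subseteq> set v2"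
    using cv u_split(1) distinct_u unfolding v_eq by auto
  ultimately have "b \<in> between al xi" and "v2 \<in> between u2 w2"
    using dv u_split w_split first_common unfolding between_def by auto
  with v_eq show ?thesis by (rule that)
qed

lemma append_Cons_in_between:
  assumes b: "b \<in> between al xi" and v2: "v2 \<in> between u2 w2"
  shows "b @ c # v2 \<in> between (al @ c # u2) (xi @ c # w2)"
proof -
  have sb: "set b \<subseteq> set al \<union> set xi" and sv2: "set v2 \<subseteq> set u2 \<union> set w2"
    using b v2 by (simp_all add: between_def)
  have disj: "set b \<inter> set u2 = {}" "set al \<inter> set v2 = {}" "set b \<inter> set w2 = {}" "set xi \<inter> set v2 = {}"
    using sb sv2 distinct_u distinct_w first_common by auto
  have "set b \<inter> set v2 = {}"
    using sb sv2 distinct_u distinct_w first_common by auto blast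
  then have dv: "distinct (b @ c # v2)"
    using b v2 sb sv2 distinct_u distinct_w by (auto simp: between_def)
  from disj have "same_order (al @ c # u2) (b @ c # v2)" and "same_order (xi @ c # w2) (b @ c # v2)"
    using b v2 unfolding same_order_append_Cons_iff[OF distinct_u dv]
      same_order_append_Cons_iff[OF distinct_w dv] by (simp_all add: between_def)
  moreover have "set (al @ c # u2) \<inter> set (xi @ c # w2) \<subseteq> set (b @ c # v2)"
    using v2 first_common by (auto simp: between_def)
  ultimately show ?thesis
    using sb sv2 dv unfolding between_def by auto
qed

lemma between_append_Cons:
  "between (al @ c # u2) (xi @ c # w2) = (\<lambda>(b, v). b @ c # v) ` (between al xi \<times> between u2 w2)"
  by (auto elim!: between_append_Cons_split intro: append_Cons_in_between)

lemma rank_count_append_Cons: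
  "rank_count (al @ c # u2) (xi @ c # w2) = convolution (rank_count al xi) (rank_count u2 w2)"
proof
  fix i
  let ?pairs = "{(b, v) \<in> between al xi \<times> between u2 w2. letter_dist al b + letter_dist u2 v = i}"
  have sets: "set b \<subseteq> set al \<union> set xi" "set v \<subseteq> set u2 \<union> set w2"
    if "b \<in> between al xi" "v \<in> between u2 w2" for b v
    using that by (simp_all add: between_def)
  have "letter_dist (al @ c # u2) (b @ c # v) = letter_dist al b + letter_dist u2 v"
    if "b \<in> between al xi" "v \<in> between u2 w2" for b v
  proof (rule letter_dist_append_Cons)
    show "c \<notin> set al \<union> set u2 \<union> set b \<union> set v"
      using sets[OF that] distinct_u distinct_w first_common by auto
    show "(set al \<union> set b) \<inter> (set u2 \<union> set v) = {}"
      using sets[OF that] distinct_u distinct_w first_common by auto blast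
  qed
  then have "{v \<in> between (al @ c # u2) (xi @ c # w2). letter_dist (al @ c # u2) v = i} =
      (\<lambda>(b, v). b @ c # v) ` ?pairs"
    unfolding between_append_Cons by auto
  moreover have "inj_on (\<lambda>(b, v). b @ c # v) ?pairs"
  proof (rule inj_onI)
    fix p q assume p: "p \<in> ?pairs" and "(\<lambda>(b, v). b @ c # v) p = (\<lambda>(b, v). b @ c # v) q"
    then have "fst p @ c # snd p = fst q @ c # snd q" by (simp add: case_prod_unfold)
    moreover have "c \<notin> set (fst p)" "c \<notin> set (snd p)"
      using p sets[of "fst p" "snd p"] distinct_u distinct_w by auto
    ultimately show "p = q" by (simp add: append_Cons_eq_iff prod_eq_iff)
  qed
  ultimately have "rank_count (al @ c # u2) (xi @ c # w2) i = card ?pairs"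
    unfolding rank_count_def by (simp add: card_image)
  also have "\<dots> = convolution (rank_count al xi) (rank_count u2 w2) i"
    unfolding rank_count_def by (rule card_pairs_eq_convolution[OF finite_between finite_between])
  finally show "rank_count (al @ c # u2) (xi @ c # w2) i = convolution (rank_count al xi) (rank_count u2 w2) i" .
qed

end

section \<open>Counting shuffles by rank\<close>

lemma convolution_choose: "convolution (\<lambda>p. a choose p) (\<lambda>q. b choose q) r = (a + b) choose r"
proof -
  have "convolution (\<lambda>p. a choose p) (\<lambda>q. b choose q) r = (\<Sum>p\<le>r. (a choose p) * (b choose (r - p)))"
    unfolding convolution_def by (rule sum.reindex_bij_witness[of _ "\<lambda>p. (p, r - p)" fst]) auto
  also have "\<dots> = (a + b) choose r" by (rule vandermonde)
  finally show ?thesis .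
qed

lemma convolution_choose_shifted:
  "(\<Sum>(p, l) \<in> {(p, l). p + l = i}. if j \<le> l then (a choose p) * (b choose (l - j)) else 0) =
    (if j \<le> i then (a + b) choose (i - j) else 0)"
proof (cases "j \<le> i")
  case True
  have "(\<Sum>(p, l) \<in> {(p, l). p + l = i}. if j \<le> l then (a choose p) * (b choose (l - j)) else 0) =
      (\<Sum>(p, l) \<in> {(p, l). p + l = i \<and> j \<le> l}. (a choose p) * (b choose (l - j)))"
    by (rule sum.mono_neutral_cong_right) (auto simp: finite_antidiagonal split: if_split_asm)
  also have "\<dots> = convolution (\<lambda>p. a choose p) (\<lambda>q. b choose q) (i - j)"
    unfolding convolution_def
    by (rule sum.reindex_bij_witness[where j = "\<lambda>(p, l). (p, l - j)" and i = "\<lambda>(p, q). (p, q + j)"])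
      (use True in auto)
  finally show ?thesis
    using True by (simp add: convolution_choose)
next
  case False
  then show ?thesis by (intro trans[OF sum.neutral]) auto
qed

lemma palindromic_shifted_choose: "palindromic (d + 2 * j) (\<lambda>i. if j \<le> i then d choose (i - j) else 0)"
  unfolding palindromic_def
proof
  fix i
  show "(if j \<le> i then d choose (i - j) else 0) =
      (if i \<le> d + 2 * j then if j \<le> d + 2 * j - i then d choose (d + 2 * j - i - j) else 0 else 0)"
  proof (cases "j \<le> i \<and> i \<le> d + j")
    case True
    then have "d choose (i - j) = d choose (d - (i - j))" by (intro binomial_symmetric) auto
    moreover have "d - (i - j) = d + 2 * j - i - j" using True by auto
    ultimately show ?thesis using True by auto
  qed (auto simp: binomial_eq_0)
qed

lemma choose_add_eq_sum_choose:
  assumes "k \<le> K"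
  shows "(k + l) choose k = (\<Sum>j\<le>K. (k choose j) * (l choose j))"
proof -
  have "(k + l) choose k = (\<Sum>j\<le>k. (l choose j) * (k choose (k - j)))"
    using vandermonde[of l k k] by (simp add: add.commute)
  also have "\<dots> = (\<Sum>j\<le>k. (k choose j) * (l choose j))"
    by (intro sum.cong refl) (simp add: binomial_symmetric[symmetric])
  also have "\<dots> = (\<Sum>j\<le>K. (k choose j) * (l choose j))"
    using assms by (intro sum.mono_neutral_left) auto
  finally show ?thesis .
qed

lemma choose_mult_swap: "(m choose p) * ((m - p) choose j) = (m choose j) * ((m - j) choose p)"
proof (cases "p + j \<le> m")
  case True
  have "(m choose (m - j)) * ((m - j) choose p) = (m choose p) * ((m - p) choose (m - j - p))"
    using True by (intro choose_mult) auto
  moreover have "m choose (m - j) = m choose j"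
    using True by (simp add: binomial_symmetric[symmetric])
  moreover have "(m - p) choose j = (m - p) choose (m - p - j)"
    using True by (intro binomial_symmetric) auto
  moreover have "m - p - j = m - j - p" by simp
  ultimately show ?thesis by simp
next
  case False
  then show ?thesis by (cases "p \<le> m"; cases "j \<le> m") (simp_all add: binomial_eq_0)
qed

lemma choose_mult_cond:
  "(n choose l) * (l choose j) = (if j \<le> l then (n choose j) * ((n - j) choose (l - j)) else 0)"
proof (cases "j \<le> l \<and> l \<le> n")
  case True
  then show ?thesis by (simp add: choose_mult)
next
  case False
  then show ?thesis by (cases "j \<le> n") (auto simp: binomial_eq_0)
qed

text \<open>The number of elements of rank i in W_mn: choose p A-letters to delete and l X-letters
  to insert, p + l = i, and one of the C(m - p + l, m - p) interleavings of the resulting words.\<close>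

definition shuffle_rank_count :: "nat \<Rightarrow> nat \<Rightarrow> nat \<Rightarrow> nat" where
  "shuffle_rank_count m n i =
     (\<Sum>(p, l) \<in> {(p, l). p + l = i}. (m choose p) * (n choose l) * ((m - p + l) choose (m - p)))"

lemma choose_product_sum_expansion:
  "(m choose p) * (n choose l) * ((m - p + l) choose (m - p)) =
    (\<Sum>j\<le>m. (m choose j) * (n choose j) *
      (if j \<le> l then ((m - j) choose p) * ((n - j) choose (l - j)) else 0))"
proof -
  have "(m choose p) * ((m - p) choose j) * ((n choose l) * (l choose j)) =
      (m choose j) * (n choose j) * (if j \<le> l then ((m - j) choose p) * ((n - j) choose (l - j)) else 0)"
    for j
    unfolding choose_mult_swap[of m p j] choose_mult_cond[of n l j] by simp
  moreover have "(m - p + l) choose (m - p) = (\<Sum>j\<le>m. ((m - p) choose j) * (l choose j))"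
    by (rule choose_add_eq_sum_choose) simp
  ultimately show ?thesis
    by (simp add: sum_distrib_left mult_ac)
qed

lemma shuffle_rank_count_closed_form:
  "shuffle_rank_count m n i =
    (\<Sum>j \<le> min m n. (m choose j) * (n choose j) * (if j \<le> i then (m + n - 2 * j) choose (i - j) else 0))"
proof -
  let ?AD = "{(p, l). p + l = i}"
  let ?F = "\<lambda>j p l. if j \<le> l then ((m - j) choose p) * ((n - j) choose (l - j)) else 0"
  have "shuffle_rank_count m n i = (\<Sum>(p, l) \<in> ?AD. \<Sum>j\<le>m. (m choose j) * (n choose j) * ?F j p l)"
    unfolding shuffle_rank_count_def choose_product_sum_expansion ..
  also have "\<dots> = (\<Sum>j\<le>m. \<Sum>(p, l) \<in> ?AD. (m choose j) * (n choose j) * ?F j p l)"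
    unfolding case_prod_unfold by (rule sum.swap)
  also have "\<dots> = (\<Sum>j \<le> min m n. (m choose j) * (n choose j) *
      (if j \<le> i then (m + n - 2 * j) choose (i - j) else 0))"
  proof (rule sum.mono_neutral_cong_right)
    fix j assume "j \<in> {..min m n}"
    then have "(m - j) + (n - j) = m + n - 2 * j" by simp
    then show "(\<Sum>(p, l) \<in> ?AD. (m choose j) * (n choose j) * ?F j p l) =
        (m choose j) * (n choose j) * (if j \<le> i then (m + n - 2 * j) choose (i - j) else 0)"
      using convolution_choose_shifted[where i = i and j = j and a = "m - j" and b = "n - j"]
      by (simp add: sum_distrib_left[symmetric] case_prod_unfold)
  next
    show "\<forall>j \<in> {..m} - {..min m n}. (\<Sum>(p, l) \<in> ?AD. (m choose j) * (n choose j) * ?F j p l) = 0"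
    proof
      fix j assume "j \<in> {..m} - {..min m n}"
      then have "n < j" by auto
      then show "(\<Sum>(p, l) \<in> ?AD. (m choose j) * (n choose j) * ?F j p l) = 0"
        by (simp add: binomial_eq_0)
    qed
  qed auto
  finally show ?thesis .
qed

lemma palindromic_shuffle_rank_count: "palindromic (m + n) (shuffle_rank_count m n)"
proof -
  have "palindromic (m + n) (\<lambda>i. if j \<le> i then (m + n - 2 * j) choose (i - j) else 0)"
    if "j \<in> {..min m n}" for j
    using palindromic_shifted_choose[of "m + n - 2 * j" j] that by simp
  then have "palindromic (m + n) (\<lambda>i. \<Sum>j \<le> min m n. (m choose j) * (n choose j) *
      (if j \<le> i then (m + n - 2 * j) choose (i - j) else 0))"
    by (rule palindromic_sum)
  then show ?thesis
    unfolding shuffle_rank_count_closed_form[abs_def] .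
qed

lemma sum_subset_pairs_by_card:
  assumes "finite A" and "finite B"
  shows "(\<Sum>(D, Q) \<in> {(D, Q) \<in> Pow A \<times> Pow B. card D + card Q = i}. h (card D) (card Q)) =
    (\<Sum>(p, l) \<in> {(p, l). p + l = i}. (card A choose p) * (card B choose l) * h p l)"
proof -
  let ?I = "{(D, Q) \<in> Pow A \<times> Pow B. card D + card Q = i}"
  let ?g = "\<lambda>(D, Q). (card D, card Q)"
  have fin: "finite ?I"
    by (rule finite_subset[of _ "Pow A \<times> Pow B"]) (use assms in auto)
  have fibre: "{x \<in> ?I. ?g x = (p, l)} = {D. D \<subseteq> A \<and> card D = p} \<times> {Q. Q \<subseteq> B \<and> card Q = l}"
    if "p + l = i" for p l
    using that by auto
  have "(\<Sum>(D, Q) \<in> ?I. h (card D) (card Q)) =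
      (\<Sum>y \<in> {(p, l). p + l = i}. \<Sum>x \<in> {x \<in> ?I. ?g x = y}. (case x of (D, Q) \<Rightarrow> h (card D) (card Q)))"
    by (rule sum.group[symmetric, OF fin finite_antidiagonal]) auto
  also have "\<dots> = (\<Sum>(p, l) \<in> {(p, l). p + l = i}. (card A choose p) * (card B choose l) * h p l)"
  proof (rule sum.cong[OF refl])
    fix y assume "y \<in> {(p, l). p + l = i}"
    then obtain p l where y: "y = (p, l)" and "p + l = i" by auto
    then have "(\<Sum>x \<in> {x \<in> ?I. ?g x = y}. (case x of (D, Q) \<Rightarrow> h (card D) (card Q))) =
        (\<Sum>x \<in> {D. D \<subseteq> A \<and> card D = p} \<times> {Q. Q \<subseteq> B \<and> card Q = l}. h p l)"
      unfolding fibre[OF \<open>p + l = i\<close>] by (intro sum.cong refl) auto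
    then show "(\<Sum>x \<in> {x \<in> ?I. ?g x = y}. (case x of (D, Q) \<Rightarrow> h (card D) (card Q))) =
        (case y of (p, l) \<Rightarrow> (card A choose p) * (card B choose l) * h p l)"
      using assms by (simp add: y card_cartesian_product n_subsets)
  qed
  finally show ?thesis .
qed

section \<open>Words without common letters\<close>

definition subword_shuffles :: "'a list \<Rightarrow> 'a list \<Rightarrow> 'a set \<times> 'a set \<Rightarrow> 'a list set" where
  "subword_shuffles al xi = (\<lambda>(D, Q). shuffles (filter (\<lambda>c. c \<notin> D) al) (filter (\<lambda>c. c \<in> Q) xi))"

lemma set_subword_shuffles:
  assumes "Q \<subseteq> set xi" and "v \<in> subword_shuffles al xi (D, Q)"
  shows "set v = (set al - D) \<union> Q"
  using assms set_shuffles[of v] unfolding subword_shuffles_def by auto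

context
  fixes al xi :: "'a list"
  assumes dal: "distinct al" and dxi: "distinct xi" and disj: "set al \<inter> set xi = {}"
begin

lemma letter_dist_subword_shuffles:
  assumes "D \<subseteq> set al" and "Q \<subseteq> set xi" and "v \<in> subword_shuffles al xi (D, Q)"
  shows "letter_dist al v = card D + card Q"
proof -
  have "set al - set v = D" and "set v - set al = Q"
    using set_subword_shuffles[OF assms(2,3)] assms(1,2) disj by auto
  then show ?thesis unfolding letter_dist_def by simp
qed

lemma card_subword_shuffles:
  assumes "D \<subseteq> set al" and "Q \<subseteq> set xi"
  shows "card (subword_shuffles al xi (D, Q)) = (length al - card D + card Q) choose (length al - card D)"
proof -
  have "set (filter (\<lambda>c. c \<notin> D) al) = set al - D" and "set (filter (\<lambda>c. c \<in> Q) xi) = Q"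
    using assms(2) by auto
  then have "length (filter (\<lambda>c. c \<notin> D) al) = card (set al - D)"
    and "length (filter (\<lambda>c. c \<in> Q) xi) = card Q"
    using distinct_card[OF distinct_filter[OF dal]] distinct_card[OF distinct_filter[OF dxi]] by metis+
  moreover have "card (set al - D) = length al - card D"
    using assms(1) dal by (simp add: card_Diff_subset finite_subset distinct_card)
  moreover have "set (filter (\<lambda>c. c \<notin> D) al) \<inter> set (filter (\<lambda>c. c \<in> Q) xi) = {}"
    using disj by auto
  ultimately show ?thesis
    unfolding subword_shuffles_def by (simp add: card_disjoint_shuffles)
qed

lemma between_disjoint_in_subword_shuffles:
  assumes "v \<in> between al xi"
  shows "v \<in> subword_shuffles al xi (set al - set v, set v \<inter> set xi)"
proof -
  from assms have sv: "set v \<subseteq> set al \<union> set xi" and al_v: "same_order al v" and xi_v: "same_order xi v"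
    by (simp_all add: between_def)
  have "filter (\<lambda>c. c \<in> set al) v = filter (\<lambda>c. c \<in> set v) al"
    using al_v by (simp add: same_order_def)
  also have "\<dots> = filter (\<lambda>c. c \<notin> set al - set v) al"
    by (rule filter_cong) auto
  finally have left: "filter (\<lambda>c. c \<in> set al) v = filter (\<lambda>c. c \<notin> set al - set v) al" .
  have "filter (\<lambda>c. c \<notin> set al) v = filter (\<lambda>c. c \<in> set xi) v"
    using sv disj by (intro filter_cong) auto
  also have "\<dots> = filter (\<lambda>c. c \<in> set v) xi"
    using xi_v by (simp add: same_order_def)
  also have "\<dots> = filter (\<lambda>c. c \<in> set v \<inter> set xi) xi"
    by (rule filter_cong) auto
  finally have right: "filter (\<lambda>c. c \<notin> set al) v = filter (\<lambda>c. c \<in> set v \<inter> set xi) xi" .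
  show ?thesis
    using partition_in_shuffles[of v "\<lambda>c. c \<in> set al"] unfolding subword_shuffles_def left right by simp
qed

lemma subword_shuffles_subset_between:
  assumes "Q \<subseteq> set xi"
  shows "subword_shuffles al xi (D, Q) \<subseteq> between al xi"
proof
  fix v assume v: "v \<in> subword_shuffles al xi (D, Q)"
  define xs ys where "xs = filter (\<lambda>c. c \<notin> D) al" and "ys = filter (\<lambda>c. c \<in> Q) xi"
  have v_xs_ys: "v \<in> shuffles xs ys"
    using v unfolding subword_shuffles_def xs_def ys_def by simp
  have disj_xs_ys: "set xs \<inter> set ys = {}"
    using disj unfolding xs_def ys_def by auto
  have sv: "set v = set xs \<union> set ys"
    using v_xs_ys by (rule set_shuffles)
  have "distinct v"
    using distinct_disjoint_shuffles[OF _ _ disj_xs_ys v_xs_ys] dal dxi unfolding xs_def ys_def by simp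
  moreover have "same_order al v"
  proof -
    have "filter (\<lambda>c. c \<in> set v) al = xs"
      and "filter (\<lambda>c. c \<in> set al) v = filter (\<lambda>c. c \<in> set xs) v"
      using sv disj unfolding xs_def ys_def by (auto intro: filter_cong)
    then show ?thesis
      using filter_shuffles_disjoint1(1)[OF disj_xs_ys v_xs_ys] unfolding same_order_def by simp
  qed
  moreover have "same_order xi v"
  proof -
    have "filter (\<lambda>c. c \<in> set v) xi = ys"
      and "filter (\<lambda>c. c \<in> set xi) v = filter (\<lambda>c. c \<in> set ys) v"
      using sv disj assms unfolding xs_def ys_def by (auto intro: filter_cong)
    then show ?thesis
      using filter_shuffles_disjoint2(1)[OF disj_xs_ys v_xs_ys] unfolding same_order_def by simp
  qed
  ultimately show "v \<in> between al xi"
    using sv disj unfolding between_def xs_def ys_def by auto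
qed

lemma rank_level_disjoint:
  "{v \<in> between al xi. letter_dist al v = i} =
    (\<Union>p \<in> {(D, Q) \<in> Pow (set al) \<times> Pow (set xi). card D + card Q = i}. subword_shuffles al xi p)"
proof (intro equalityI subsetI)
  fix v assume "v \<in> {v \<in> between al xi. letter_dist al v = i}"
  then have v: "v \<in> subword_shuffles al xi (set al - set v, set v \<inter> set xi)"
    and "letter_dist al v = i"
    by (simp_all add: between_disjoint_in_subword_shuffles)
  moreover from v have "letter_dist al v = card (set al - set v) + card (set v \<inter> set xi)"
    by (intro letter_dist_subword_shuffles) auto
  ultimately show "v \<in> (\<Union>p \<in> {(D, Q) \<in> Pow (set al) \<times> Pow (set xi). card D + card Q = i}.
      subword_shuffles al xi p)"
    by (intro UN_I[of "(set al - set v, set v \<inter> set xi)"]) auto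
next
  fix v assume "v \<in> (\<Union>p \<in> {(D, Q) \<in> Pow (set al) \<times> Pow (set xi). card D + card Q = i}. subword_shuffles al xi p)"
  then obtain D Q where DQ: "D \<subseteq> set al" "Q \<subseteq> set xi" "card D + card Q = i"
    and v: "v \<in> subword_shuffles al xi (D, Q)" by auto
  then show "v \<in> {v \<in> between al xi. letter_dist al v = i}"
    using subword_shuffles_subset_between[OF DQ(2)] letter_dist_subword_shuffles[OF DQ(1,2) v] by auto
qed

lemma subword_shuffles_disjoint:
  assumes "p \<in> Pow (set al) \<times> Pow (set xi)" and "q \<in> Pow (set al) \<times> Pow (set xi)" and "p \<noteq> q"
  shows "subword_shuffles al xi p \<inter> subword_shuffles al xi q = {}"
proof (rule ccontr)
  obtain D Q D' Q' where p: "p = (D, Q)" and q: "q = (D', Q')"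
    and sub: "D \<subseteq> set al" "D' \<subseteq> set al" "Q \<subseteq> set xi" "Q' \<subseteq> set xi"
    using assms(1,2) by auto
  assume "subword_shuffles al xi p \<inter> subword_shuffles al xi q \<noteq> {}"
  then obtain v where "v \<in> subword_shuffles al xi (D, Q)" and "v \<in> subword_shuffles al xi (D', Q')"
    unfolding p q by blast
  then have "set al - D \<union> Q = set al - D' \<union> Q'"
    using set_subword_shuffles sub by metis
  then have "D = D'" and "Q = Q'" using sub disj by blast+
  with \<open>p \<noteq> q\<close> show False unfolding p q by simp
qed

lemma rank_count_disjoint: "rank_count al xi i = shuffle_rank_count (length al) (length xi) i"
proof -
  let ?I = "{(D, Q) \<in> Pow (set al) \<times> Pow (set xi). card D + card Q = i}"
  have "rank_count al xi i = card (\<Union>p \<in> ?I. subword_shuffles al xi p)"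
    unfolding rank_count_def rank_level_disjoint ..
  also have "\<dots> = (\<Sum>p \<in> ?I. card (subword_shuffles al xi p))"
  proof (rule card_UN_disjoint)
    show "finite ?I"
      by (rule finite_subset[of _ "Pow (set al) \<times> Pow (set xi)"]) auto
    show "\<forall>p \<in> ?I. \<forall>q \<in> ?I. p \<noteq> q \<longrightarrow> subword_shuffles al xi p \<inter> subword_shuffles al xi q = {}"
      by (intro ballI impI subword_shuffles_disjoint) auto
  qed (simp add: subword_shuffles_def split: prod.split)
  also have "\<dots> = (\<Sum>(D, Q) \<in> ?I. (length al - card D + card Q) choose (length al - card D))"
    by (intro sum.cong refl) (auto simp: card_subword_shuffles)
  also have "\<dots> = shuffle_rank_count (length al) (length xi) i"
    using sum_subset_pairs_by_card[where A = "set al" and B = "set xi" and i = i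
        and h = "\<lambda>p l. (length al - p + l) choose (length al - p)"]
    by (simp add: shuffle_rank_count_def distinct_card dal dxi)
  finally show ?thesis .
qed

lemma palindromic_rank_count_disjoint: "palindromic (letter_dist al xi) (rank_count al xi)"
proof -
  have "letter_dist al xi = length al + length xi"
    using dal dxi disj by (simp add: letter_dist_def Diff_triv Int_commute distinct_card)
  moreover have "rank_count al xi = shuffle_rank_count (length al) (length xi)"
    using rank_count_disjoint by blast
  ultimately show ?thesis
    by (simp add: palindromic_shuffle_rank_count)
qed

end

theorem palindromic_rank_count:
  assumes "distinct u" and "distinct w" and "same_order u w"
  shows "palindromic (letter_dist u w) (rank_count u w)"
  using assms
proof (induction u arbitrary: w rule: length_induct)
  case (1 u)
  show ?case
  proof (cases "set u \<inter> set w = {}")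
    case True
    with "1.prems" show ?thesis by (intro palindromic_rank_count_disjoint)
  next
    case False
    then have "\<exists>y \<in> set u. y \<in> set w" by blast
    then obtain al c u2 where u: "u = al @ c # u2" and "c \<in> set w" and "\<forall>y \<in> set al. y \<notin> set w"
      by (rule split_list_first_propE)
    then have al_w: "set al \<inter> set w = {}" by blast
    from \<open>c \<in> set w\<close> obtain xi w2 where w: "w = xi @ c # w2" by (meson split_list)
    have "set xi \<inter> set u2 = {} \<and> set al \<inter> set w2 = {} \<and> same_order al xi \<and> same_order u2 w2"
      using "1.prems" same_order_append_Cons_iff[of al c u2 xi w2] unfolding u w by blast
    then have xi_u: "set xi \<inter> set u = {}" and "same_order u2 w2"
      using al_w "1.prems"(2) unfolding u w by auto
    have "palindromic (letter_dist al xi) (rank_count al xi)"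
      using "1.prems" al_w unfolding u w by (intro palindromic_rank_count_disjoint) auto
    moreover have "palindromic (letter_dist u2 w2) (rank_count u2 w2)"
      using "1.IH" "1.prems" \<open>same_order u2 w2\<close> unfolding u w by auto
    moreover have "rank_count u w = convolution (rank_count al xi) (rank_count u2 w2)"
      using "1.prems" al_w xi_u unfolding u w by (intro rank_count_append_Cons) auto
    moreover have "letter_dist u w = letter_dist al xi + letter_dist u2 w2"
      using "1.prems" al_w xi_u unfolding u w by (intro letter_dist_append_Cons) auto
    ultimately show ?thesis
      by (simp add: palindromic_convolution)
  qed
qed

corollary card_rank_levels_symmetric:
  assumes "distinct u" and "distinct w" and "same_order u w"
  shows "card {v \<in> between u w. letter_dist u v = i} =
    card {v \<in> between u w. letter_dist u v + i = letter_dist u w}"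
proof (cases "i \<le> letter_dist u w")
  case True
  then have "{v \<in> between u w. letter_dist u v + i = letter_dist u w} =
      {v \<in> between u w. letter_dist u v = letter_dist u w - i}"
    by auto
  then show ?thesis
    using palindromic_reflect[OF palindromic_rank_count[OF assms] True] by (simp add: rank_count_def)
next
  case False
  then have "{v \<in> between u w. letter_dist u v + i = letter_dist u w} = {}"
    by auto
  then show ?thesis
    using palindromic_beyond[OF palindromic_rank_count[OF assms]] False by (simp add: rank_count_def)
qed

section \<open>The shuffle order\<close>

lemma W_distinct: "w \<in> W M N \<Longrightarrow> distinct w"
  by (simp add: W_def shuffle_word_def)

lemma W_letters: "w \<in> W M N \<Longrightarrow> set w \<subseteq> alphA M \<union> alphX N"
  by (simp add: W_def shuffle_word_def)

lemma alphA_isl: "c \<in> alphA M \<Longrightarrow> isl c"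
  by (auto simp: alphA_def)

lemma alphX_not_isl: "c \<in> alphX N \<Longrightarrow> \<not> isl c"
  by (auto simp: alphX_def)

lemma filter_in_W:
  assumes "w \<in> W M N"
  shows "filter P w \<in> W M N"
proof -
  have sw: "shuffle_word M N w" using assms by (simp add: W_def)
  have "sorted_wrt (\<lambda>x y. projl x < projl y) (filter P (filter isl w))"
    by (rule sorted_wrt_filter) (use sw in \<open>simp add: shuffle_word_def A_subscripts_def sorted_wrt_map\<close>)
  then have "sorted_wrt (<) (A_subscripts (filter P w))"
    by (simp add: A_subscripts_def sorted_wrt_map filter_filter conj_commute)
  moreover have "sorted_wrt (\<lambda>x y. projr x < projr y) (filter P (filter (\<lambda>c. \<not> isl c) w))"
    by (rule sorted_wrt_filter) (use sw in \<open>simp add: shuffle_word_def X_subscripts_def sorted_wrt_map\<close>)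
  then have "sorted_wrt (<) (X_subscripts (filter P w))"
    by (simp add: X_subscripts_def sorted_wrt_map filter_filter conj_commute)
  ultimately show ?thesis
    using sw by (auto simp: W_def shuffle_word_def)
qed

definition del_ins :: "('a + 'b) list \<Rightarrow> ('a + 'b) list \<Rightarrow> bool" where
  "del_ins u v \<longleftrightarrow>
     (\<forall>c \<in> set v. isl c \<longrightarrow> c \<in> set u) \<and> (\<forall>c \<in> set u. \<not> isl c \<longrightarrow> c \<in> set v) \<and>
     same_order u v"

lemma del_ins_refl: "del_ins u u"
  by (simp add: del_ins_def same_order_refl)

lemma del_ins_trans:
  assumes uv: "del_ins u v" and vw: "del_ins v w"
  shows "del_ins u w"
proof -
  have common: "c \<in> set v" if "c \<in> set u" and "c \<in> set w" for c
    using uv vw that unfolding del_ins_def by (cases "isl c") blast+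
  have "filter (\<lambda>c. c \<in> set w) u = filter (\<lambda>c. c \<in> set w) (filter (\<lambda>c. c \<in> set v) u)"
    unfolding filter_filter by (rule filter_cong) (auto intro: common)
  also have "\<dots> = filter (\<lambda>c. c \<in> set w) (filter (\<lambda>c. c \<in> set u) v)"
    using uv by (simp add: del_ins_def same_order_def)
  also have "\<dots> = filter (\<lambda>c. c \<in> set u) (filter (\<lambda>c. c \<in> set w) v)"
    unfolding filter_filter by (rule filter_cong) auto
  also have "\<dots> = filter (\<lambda>c. c \<in> set u) (filter (\<lambda>c. c \<in> set v) w)"
    using vw by (simp add: del_ins_def same_order_def)
  also have "\<dots> = filter (\<lambda>c. c \<in> set u) w"
    unfolding filter_filter by (rule filter_cong) (auto intro: common)
  finally have "same_order u w" unfolding same_order_def .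
  with uv vw show ?thesis unfolding del_ins_def by blast
qed

lemma covered_by_imp_del_ins:
  assumes "covered_by M N u v"
  shows "del_ins u v"
proof -
  have "u \<in> W M N" and "v \<in> W M N"
    using assms by (simp_all add: covered_by_def)
  then have du: "distinct u" and dv: "distinct v"
    by (simp_all add: W_distinct)
  from assms consider
      (del) xs ys c where "c \<in> alphA M" "u = xs @ [c] @ ys" "v = xs @ ys"
    | (ins) xs ys c where "c \<in> alphX N" "u = xs @ ys" "v = xs @ [c] @ ys"
    unfolding covered_by_def by blast
  then show ?thesis
  proof cases
    case del
    from \<open>c \<in> alphA M\<close> have "isl c" by (rule alphA_isl)
    moreover have "filter (\<lambda>x. x \<in> set v) u = v" and "filter (\<lambda>x. x \<in> set u) v = v"
      using du del by (auto intro!: filter_True)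
    ultimately show ?thesis using del by (auto simp: del_ins_def same_order_def)
  next
    case ins
    from \<open>c \<in> alphX N\<close> have "\<not> isl c" by (rule alphX_not_isl)
    moreover have "filter (\<lambda>x. x \<in> set v) u = u" and "filter (\<lambda>x. x \<in> set u) v = u"
      using dv ins by (auto intro!: filter_True)
    ultimately show ?thesis using ins by (auto simp: del_ins_def same_order_def)
  qed
qed

lemma shuffle_le_imp_del_ins: "shuffle_le M N u w \<Longrightarrow> del_ins u w"
  unfolding shuffle_le_def
  by (auto elim!: rtranclp_induct intro: del_ins_refl del_ins_trans covered_by_imp_del_ins)

lemma covered_by_delete:
  assumes u: "u \<in> W M N" and "a \<in> set u" and "isl a"
  shows "covered_by M N u (filter (\<lambda>c. c \<noteq> a) u)"
proof -
  obtain xs ys where u_eq: "u = xs @ a # ys" using \<open>a \<in> set u\<close> by (meson split_list)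
  have "filter (\<lambda>c. c \<noteq> a) xs = xs" and "filter (\<lambda>c. c \<noteq> a) ys = ys"
    using W_distinct[OF u] unfolding u_eq by (auto simp: filter_id_conv)
  then have del: "filter (\<lambda>c. c \<noteq> a) u = xs @ ys" unfolding u_eq by simp
  have "a \<in> alphA M"
    using W_letters[OF u] \<open>a \<in> set u\<close> \<open>isl a\<close> alphX_not_isl by blast
  then have "\<exists>xs' ys' c. c \<in> alphA M \<and> u = xs' @ [c] @ ys' \<and> xs @ ys = xs' @ ys'"
    using u_eq by (intro exI[of _ xs] exI[of _ ys] exI[of _ a]) simp
  moreover have "xs @ ys \<in> W M N" using filter_in_W[OF u] del by metis
  ultimately show ?thesis
    using u unfolding covered_by_def del by blast
qed

lemma covered_by_insert:
  assumes w: "w \<in> W M N" and "x \<in> set w" and "\<not> isl x" and "x \<notin> S"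
  shows "covered_by M N (filter (\<lambda>c. c \<in> S) w) (filter (\<lambda>c. c \<in> S \<or> c = x) w)"
proof -
  obtain w1 w2 where w_eq: "w = w1 @ x # w2" using \<open>x \<in> set w\<close> by (meson split_list)
  have "filter (\<lambda>c. c \<in> S \<or> c = x) w1 = filter (\<lambda>c. c \<in> S) w1"
    and "filter (\<lambda>c. c \<in> S \<or> c = x) w2 = filter (\<lambda>c. c \<in> S) w2"
    using W_distinct[OF w] unfolding w_eq by (auto intro!: filter_cong)
  then have "filter (\<lambda>c. c \<in> S \<or> c = x) w = filter (\<lambda>c. c \<in> S) w1 @ [x] @ filter (\<lambda>c. c \<in> S) w2"
    and "filter (\<lambda>c. c \<in> S) w = filter (\<lambda>c. c \<in> S) w1 @ filter (\<lambda>c. c \<in> S) w2"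
    using \<open>x \<notin> S\<close> unfolding w_eq by simp_all
  moreover have "x \<in> alphX N"
    using W_letters[OF w] \<open>x \<in> set w\<close> \<open>\<not> isl x\<close> alphA_isl by blast
  ultimately show ?thesis
    using filter_in_W[OF w] unfolding covered_by_def by blast
qed

lemma del_ins_delete:
  assumes "del_ins u w" and "a \<notin> set w"
  shows "del_ins (filter (\<lambda>c. c \<noteq> a) u) w"
proof -
  have "filter (\<lambda>c. c \<in> set w) (filter (\<lambda>c. c \<noteq> a) u) = filter (\<lambda>c. c \<in> set w) u"
    using assms(2) by (auto simp: filter_filter intro: filter_cong)
  also have "\<dots> = filter (\<lambda>c. c \<in> set u) w"
    using assms(1) by (simp add: del_ins_def same_order_def)
  also have "\<dots> = filter (\<lambda>c. c \<in> set (filter (\<lambda>c. c \<noteq> a) u)) w"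
    using assms(2) by (auto intro: filter_cong)
  finally show ?thesis
    using assms unfolding del_ins_def same_order_def by auto
qed

lemma del_ins_insert:
  assumes "del_ins u w"
  shows "del_ins (filter (\<lambda>c. c \<in> set u \<or> c = x) w) w"
proof -
  let ?u' = "filter (\<lambda>c. c \<in> set u \<or> c = x) w"
  have "filter (\<lambda>c. c \<in> set w) ?u' = ?u'" by (rule filter_True) auto
  moreover have "filter (\<lambda>c. c \<in> set ?u') w = ?u'" by (auto intro: filter_cong)
  ultimately show ?thesis
    using assms unfolding del_ins_def same_order_def by auto
qed

lemma del_ins_covered_step:
  assumes u: "u \<in> W M N" and w: "w \<in> W M N" and uw: "del_ins u w" and "u \<noteq> w"
  obtains u' where "covered_by M N u u'" and "u' \<in> W M N" and "del_ins u' w"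
    and "letter_dist u' w < letter_dist u w"
proof (cases "set u \<subseteq> set w")
  case False
  then obtain a where a: "a \<in> set u" "a \<notin> set w" by blast
  then have "isl a" using uw by (auto simp: del_ins_def)
  let ?u' = "filter (\<lambda>c. c \<noteq> a) u"
  have "set ?u' - set w \<subset> set u - set w" and "set w - set ?u' = set w - set u"
    using a by auto
  then have "letter_dist ?u' w < letter_dist u w"
    unfolding letter_dist_def by (simp add: psubset_card_mono)
  moreover have "covered_by M N u ?u'"
    using u a(1) \<open>isl a\<close> by (rule covered_by_delete)
  ultimately show ?thesis
    using that filter_in_W[OF u] del_ins_delete[OF uw a(2)] by blast
next
  case u_w: True
  have "\<not> set w \<subseteq> set u"
  proof
    assume "set w \<subseteq> set u"
    with u_w have "set u = set w" by blast
    with uw have "u = w" by (intro same_order_set_eq) (simp_all add: del_ins_def)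
    with \<open>u \<noteq> w\<close> show False ..
  qed
  then obtain x where x: "x \<in> set w" "x \<notin> set u" by blast
  then have "\<not> isl x" using uw by (auto simp: del_ins_def)
  have "u = filter (\<lambda>c. c \<in> set w) u" using u_w by (auto intro: filter_True[symmetric])
  also have "\<dots> = filter (\<lambda>c. c \<in> set u) w"
    using uw by (simp add: del_ins_def same_order_def)
  finally have u_eq: "u = filter (\<lambda>c. c \<in> set u) w" .
  let ?u' = "filter (\<lambda>c. c \<in> set u \<or> c = x) w"
  have "set ?u' - set w = set u - set w" and "set w - set ?u' \<subset> set w - set u"
    using u_w x by auto
  then have "letter_dist ?u' w < letter_dist u w"
    unfolding letter_dist_def by (simp add: psubset_card_mono)
  moreover have "covered_by M N u ?u'"
    using covered_by_insert[OF w x(1) \<open>\<not> isl x\<close> x(2)] u_eq by simp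
  ultimately show ?thesis
    using that filter_in_W[OF w] del_ins_insert[OF uw] by blast
qed

lemma del_ins_imp_rtranclp_covered_by:
  assumes "u \<in> W M N" and "w \<in> W M N" and "del_ins u w"
  shows "(covered_by M N)\<^sup>*\<^sup>* u w"
  using assms(1,3)
proof (induction "letter_dist u w" arbitrary: u rule: less_induct)
  case less
  show ?case
  proof (cases "u = w")
    case False
    then obtain u' where "covered_by M N u u'" and "(covered_by M N)\<^sup>*\<^sup>* u' w"
      using del_ins_covered_step[OF less.prems(1) assms(2) less.prems(2)] less.hyps by metis
    then show ?thesis by (rule converse_rtranclp_into_rtranclp)
  qed simp
qed

lemma shuffle_le_iff: "shuffle_le M N u w \<longleftrightarrow> u \<in> W M N \<and> w \<in> W M N \<and> del_ins u w"
  using shuffle_le_imp_del_ins del_ins_imp_rtranclp_covered_by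
  unfolding shuffle_le_def by blast

lemma A_subscripts_filter:
  assumes "\<forall>c \<in> set v. isl c \<longrightarrow> P c"
  shows "A_subscripts (filter P v) = A_subscripts v"
proof -
  have "filter isl (filter P v) = filter isl v"
    unfolding filter_filter using assms by (intro filter_cong) auto
  then show ?thesis unfolding A_subscripts_def by simp
qed

lemma X_subscripts_filter:
  assumes "\<forall>c \<in> set v. \<not> isl c \<longrightarrow> P c"
  shows "X_subscripts (filter P v) = X_subscripts v"
proof -
  have "filter (\<lambda>c. \<not> isl c) (filter P v) = filter (\<lambda>c. \<not> isl c) v"
    unfolding filter_filter using assms by (intro filter_cong) auto
  then show ?thesis unfolding X_subscripts_def by simp
qed

lemma between_subset_W:
  assumes u: "u \<in> W M N" and w: "w \<in> W M N" and uw: "del_ins u w" and v: "v \<in> between u w"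
  shows "v \<in> W M N"
proof -
  from v have sv: "set v \<subseteq> set u \<union> set w" and u_v: "same_order u v" and w_v: "same_order w v"
    by (simp_all add: between_def)
  have A_in_u: "\<forall>c \<in> set v. isl c \<longrightarrow> c \<in> set u"
    and X_in_w: "\<forall>c \<in> set v. \<not> isl c \<longrightarrow> c \<in> set w"
    using sv uw by (auto simp: del_ins_def)
  have "A_subscripts v = A_subscripts (filter (\<lambda>c. c \<in> set v) u)"
    using u_v A_subscripts_filter[OF A_in_u] by (simp add: same_order_def)
  moreover have "X_subscripts v = X_subscripts (filter (\<lambda>c. c \<in> set v) w)"
    using w_v X_subscripts_filter[OF X_in_w] by (simp add: same_order_def)
  ultimately have "sorted_wrt (<) (A_subscripts v)" and "sorted_wrt (<) (X_subscripts v)"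
    using filter_in_W[OF u] filter_in_W[OF w] by (simp_all add: W_def shuffle_word_def)
  then show ?thesis
    using v sv W_letters[OF u] W_letters[OF w] by (auto simp: W_def shuffle_word_def between_def)
qed

lemma shuffle_interval_eq_between:
  assumes "shuffle_le M N u w"
  shows "shuffle_interval M N u w = between u w"
proof (intro equalityI subsetI)
  fix v assume "v \<in> shuffle_interval M N u w"
  then have "v \<in> W M N" and uv: "del_ins u v" and vw: "del_ins v w"
    by (simp_all add: shuffle_interval_def shuffle_le_iff)
  have "set u \<inter> set w \<subseteq> set v" and "set v \<subseteq> set u \<union> set w"
    using uv vw by (auto simp: del_ins_def)
  moreover have "same_order u v" and "same_order w v"
    using uv vw by (simp_all add: del_ins_def same_order_sym)
  ultimately show "v \<in> between u w"
    using W_distinct[OF \<open>v \<in> W M N\<close>] by (simp add: between_def)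
next
  fix v assume v: "v \<in> between u w"
  have u: "u \<in> W M N" and w: "w \<in> W M N" and uw: "del_ins u w"
    using assms by (simp_all add: shuffle_le_iff)
  have "del_ins u v" and "del_ins v w"
    using v uw by (auto simp: between_def del_ins_def same_order_sym)
  then show "v \<in> shuffle_interval M N u w"
    using between_subset_W[OF u w uw v] u w by (simp add: shuffle_interval_def shuffle_le_iff)
qed

lemma rho_shuffle_le:
  assumes "shuffle_le M N u v"
  shows "rho M N v = rho M N u + letter_dist u v"
proof -
  have u: "u \<in> W M N" and v: "v \<in> W M N" and uv: "del_ins u v"
    using assms by (simp_all add: shuffle_le_iff)
  have "set u - set v \<subseteq> alphA M" and "set v - set u \<subseteq> alphX N"
    using uv W_letters[OF u] W_letters[OF v] alphA_isl alphX_not_isl unfolding del_ins_def by blast+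
  then have "set u \<inter> alphA M = (set v \<inter> alphA M) \<union> (set u - set v)"
    and "set v \<inter> alphX N = (set u \<inter> alphX N) \<union> (set v - set u)"
    using uv by (auto simp: del_ins_def dest: alphA_isl alphX_not_isl)
  then have "card (set u \<inter> alphA M) = card (set v \<inter> alphA M) + card (set u - set v)"
    and "card (set v \<inter> alphX N) = card (set u \<inter> alphX N) + card (set v - set u)"
    using card_Un_disjoint[of "set v \<inter> alphA M" "set u - set v"]
      card_Un_disjoint[of "set u \<inter> alphX N" "set v - set u"] by auto
  moreover have "card (set u \<inter> alphA M) \<le> M"
    using card_mono[of "alphA M" "set u \<inter> alphA M"] by (auto simp: alphA_def card_image)
  ultimately show ?thesis
    unfolding rho_def letter_dist_def by simp
qed

theorem corollary3p7:
  fixes M N :: nat and u w :: "letter list" and i :: nat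
  assumes "shuffle_less M N u w"
  shows "\<exists>f. bij_betw f
            {v \<in> shuffle_interval M N u w. rho M N v = rho M N u + i}
            {v \<in> shuffle_interval M N u w. int (rho M N v) = int (rho M N w) - int i}"
proof -
  from assms have le: "shuffle_le M N u w" by (simp add: shuffle_less_def)
  then have "rho M N v = rho M N u + letter_dist u v" if "v \<in> between u w" for v
    using that by (intro rho_shuffle_le)
      (simp add: shuffle_interval_def flip: shuffle_interval_eq_between[OF le])
  moreover have "rho M N w = rho M N u + letter_dist u w"
    using le by (rule rho_shuffle_le)
  ultimately have "{v \<in> shuffle_interval M N u w. rho M N v = rho M N u + i} =
        {v \<in> between u w. letter_dist u v = i}"
    and "{v \<in> shuffle_interval M N u w. int (rho M N v) = int (rho M N w) - int i} =
        {v \<in> between u w. letter_dist u v + i = letter_dist u w}"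
    unfolding shuffle_interval_eq_between[OF le] by auto
  moreover have "card {v \<in> between u w. letter_dist u v = i} =
      card {v \<in> between u w. letter_dist u v + i = letter_dist u w}"
    using le W_distinct[of u M N] W_distinct[of w M N]
    by (intro card_rank_levels_symmetric) (auto simp: shuffle_le_iff del_ins_def)
  ultimately show ?thesis
    by (simp add: finite_same_card_bij finite_between)
qed

end
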